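(* Consider 3-Majority or 2-Choices and fix an opinion $i$. Define $$P=\exp(-\Omega(n\alpha_0(i)^2))\ \text{for 3-Majority},\qquad P=\exp(-\Omega(n\alpha_0(i)))\ \text{for 2-Choices}.$$ (i) For any constant $\varepsilon\in(0,1)$, let $C_1=\frac{(1-\varepsilon)c^\uparrow_\alpha}{(1+c^\uparrow_\alpha)^2}$. Then $\Pr[\tau^\uparrow_i\le C_1/\alpha_0(i)]\le P$. (ii) For any constant $\varepsilon\in(0,1)$, let $C_2=\frac{(1-c^{\mathrm{weak}})(1-\varepsilon)c^\downarrow_\alpha}{c^{\mathrm{weak}}(1+c^\uparrow_\alpha)^2}$. Then $\Pr[\tau^\downarrow_i\le\min\{\tau^{\mathrm{weak}}_i,\tau^\uparrow_i,C_2/\alpha_0(i)\}]\le P$.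
   Context: **Setting.** Let $V$ be a set of $n$ vertices and $k\in\{1,\dots,n\}$. A configuration is a map $\mathsf{opn}\colon V\to[k]$. The process is synchronous: each round $t\ge1$ produces $\mathsf{opn}_t$ from $\mathsf{opn}_{t-1}$, and all vertices make their choices independently. **3-Majority.** Each vertex $v$ samples $w_1,w_2,w_3\in V$ independently and uniformly, with replacement. It sets $\mathsf{opn}_t(v)=\mathsf{opn}_{t-1}(w_1)$ if $\mathsf{opn}_{t-1}(w_1)=\mathsf{opn}_{t-1}(w_2)$, and $\mathsf{opn}_t(v)=\mathsf{opn}_{t-1}(w_3)$ otherwise. **2-Choices.** Each vertex $v$ samples $w_1,w_2\in V$ independently and uniformly, with replacement. It sets $\mathsf{opn}_t(v)=\mathsf{opn}_{t-1}(w_1)$ if $\mathsf{opn}_{t-1}(w_1)=\mathsf{opn}_{t-1}(w_2)$, and $\mathsf{opn}_t(v)=\mathsf{opn}_{t-1}(v)$ otherwise. **Basic quantities.** - $\alpha_t(i)=|\{v:\mathsf{opn}_t(v)=i\}|/n$. - $\gamma_t=\sum_i\alpha_t(i)^2$. **Stopping times.** Fix constants $c^\uparrow_\alpha,c^\downarrow_\alpha>0$ and $c^{\mathrm{weak}}\in(0,1/2)$. - $\tau^\uparrow_i=\inf\{t\ge0:\alpha_t(i)\ge(1+c^\uparrow_\alpha)\alpha_0(i)\}$. - $\tau^\downarrow_i=\inf\{t\ge0:\alpha_t(i)\le(1-c^\downarrow_\alpha)\alpha_0(i)\}$. - $\tau^{\mathrm{weak}}_i=\inf\{t\ge0:\alpha_t(i)\le(1-c^{\mathrm{weak}})\gamma_t\}$.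 **Conventions.** $\Omega(\cdot)$ hides positive constants depending only on $\varepsilon$ and the fixed constants above, not on $n$, $k$ or the configuration. *)

theory Defs
  imports "HOL-Probability.Probability"
begin

text \<open>Vertices are V = {0..<n}; opinions are [k] = {1..k}. A configuration is a
  function nat => nat; only its values on {0..<n} matter (outside V the process
  sets the value 0).\<close>

type_synonym config = "nat \<Rightarrow> nat"

datatype protocol = ThreeMajority | TwoChoices

definition unif :: "nat \<Rightarrow> nat pmf" where
  "unif n = pmf_of_set {..<n}"

definition vertex_update :: "protocol \<Rightarrow> nat \<Rightarrow> config \<Rightarrow> nat \<Rightarrow> nat pmf" where
  "vertex_update p n opn v =
     (case p of
        ThreeMajority \<Rightarrow>
          bind_pmf (unif n) (\<lambda>w1. bind_pmf (unif n) (\<lambda>w2. bind_pmf (unif n) (\<lambda>w3.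
            return_pmf (if opn w1 = opn w2 then opn w1 else opn w3))))
      | TwoChoices \<Rightarrow>
          bind_pmf (unif n) (\<lambda>w1. bind_pmf (unif n) (\<lambda>w2.
            return_pmf (if opn w1 = opn w2 then opn w1 else opn v))))"

definition step :: "protocol \<Rightarrow> nat \<Rightarrow> config \<Rightarrow> config pmf" where
  "step p n opn = Pi_pmf {..<n} 0 (vertex_update p n opn)"

fun run :: "protocol \<Rightarrow> nat \<Rightarrow> config \<Rightarrow> nat \<Rightarrow> config list pmf" where
  "run p n opn0 0 = return_pmf [opn0]"
| "run p n opn0 (Suc T) =
     bind_pmf (run p n opn0 T) (\<lambda>xs. map_pmf (\<lambda>y. xs @ [y]) (step p n (last xs)))"

definition alpha :: "nat \<Rightarrow> config \<Rightarrow> nat \<Rightarrow> real" where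
  "alpha n opn i = real (card {v \<in> {..<n}. opn v = i}) / real n"

definition gamma :: "nat \<Rightarrow> nat \<Rightarrow> config \<Rightarrow> real" where
  "gamma n k opn = (\<Sum>j\<in>{1..k}. (alpha n opn j)^2)"

definition hit :: "(config \<Rightarrow> bool) \<Rightarrow> config list \<Rightarrow> enat" where
  "hit P xs = (if \<exists>t<length xs. P (xs ! t)
               then enat (LEAST t. t < length xs \<and> P (xs ! t)) else \<infinity>)"

end

theory Submission
  imports Defs
begin

text \<open>Let \<open>X\<close> be the number of vertices holding opinion \<open>i\<close>. Since the vertices update
  independently, the moment generating function \<open>E exp (l X')\<close> of the count after one round is a
  product of per-vertex factors and is at most \<open>exp (l X + D)\<close>, where the drift \<open>D\<close> is of order
  \<open>l X\<^sub>0\<^sup>2 / n\<close> plus second order terms as long as \<open>X \<le> (1 + c_up) X\<^sub>0\<close>. Hence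
  \<open>exp (l X\<^sub>t - t D)\<close> is a supermartingale up to the stopping time, and reaching
  \<open>(1 + c_up) X\<^sub>0\<close> within \<open>C\<^sub>1 n / X\<^sub>0\<close> rounds has probability at most
  \<open>exp (- l c_up X\<^sub>0 + (C\<^sub>1 n / X\<^sub>0) D)\<close>. Choosing \<open>l\<close> proportional to \<open>\<epsilon> X\<^sub>0 / n\<close> for 3-Majority
  and to \<open>\<epsilon>\<close> for 2-Choices gives the two tail bounds. The decrease is handled in the same way
  with \<open>-l\<close>: as long as \<open>i\<close> is not weak, \<open>\<alpha> > (1 - c_weak) \<gamma>\<close> bounds the number of collisions
  \<open>n\<^sup>2 \<gamma>\<close>, which controls how many vertices lose \<open>i\<close> in a round.\<close>

lemma length_run: "xs \<in> set_pmf (run p n x N) \<Longrightarrow> length xs = Suc N"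
  by (induction N arbitrary: xs) auto

lemma run_Suc_first_step:
  "run p n x (Suc N) = bind_pmf (step p n x) (\<lambda>y. map_pmf ((#) x) (run p n y N))"
proof (induction N)
  case 0
  then show ?case by (simp add: bind_return_pmf map_pmf_def)
next
  case (Suc N)
  have "run p n x (Suc (Suc N)) =
     bind_pmf (run p n x (Suc N)) (\<lambda>xs. map_pmf (\<lambda>y. xs @ [y]) (step p n (last xs)))" by simp
  also have "\<dots> = bind_pmf (step p n x) (\<lambda>y. bind_pmf (run p n y N)
       (\<lambda>ys. map_pmf (\<lambda>z. (x # ys) @ [z]) (step p n (last (x # ys)))))"
    unfolding Suc.IH by (simp only: bind_assoc_pmf bind_map_pmf)
  also have "\<dots> = bind_pmf (step p n x) (\<lambda>y. bind_pmf (run p n y N)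
       (\<lambda>ys. map_pmf ((#) x) (map_pmf (\<lambda>z. ys @ [z]) (step p n (last ys)))))"
  proof (intro bind_pmf_cong refl)
    fix y ys assume "ys \<in> set_pmf (run p n y N)"
    then have "ys \<noteq> []" using length_run by fastforce
    then show "map_pmf (\<lambda>z. (x # ys) @ [z]) (step p n (last (x # ys))) =
          map_pmf ((#) x) (map_pmf (\<lambda>z. ys @ [z]) (step p n (last ys)))"
      by (simp add: pmf.map_comp o_def)
  qed
  also have "\<dots> = bind_pmf (step p n x) (\<lambda>y. map_pmf ((#) x) (run p n y (Suc N)))"
    by (simp add: map_bind_pmf)
  finally show ?case .
qed

definition reached_while :: "(config \<Rightarrow> bool) \<Rightarrow> (config \<Rightarrow> bool) \<Rightarrow> config list set" where
  "reached_while G A = {xs. \<exists>t<length xs. A (xs!t) \<and> (\<forall>s<t. G (xs!s) \<and> \<not> A (xs!s))}"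

lemma Cons_in_reached_while_iff:
  "x # ys \<in> reached_while G A \<longleftrightarrow> A x \<or> (G x \<and> \<not> A x \<and> ys \<in> reached_while G A)"
proof
  assume "x # ys \<in> reached_while G A"
  then obtain t where t: "t < Suc (length ys)" "A ((x#ys)!t)"
      "\<forall>s<t. G ((x#ys)!s) \<and> \<not> A ((x#ys)!s)"
    by (auto simp: reached_while_def)
  show "A x \<or> (G x \<and> \<not> A x \<and> ys \<in> reached_while G A)"
  proof (cases t)
    case 0
    then show ?thesis using t by simp
  next
    case (Suc t')
    then have "G x \<and> \<not> A x" using t(3) by (metis nth_Cons_0 zero_less_Suc)
    moreover have "ys \<in> reached_while G A"
      unfolding reached_while_def using t Suc by (auto intro!: exI[of _ t'])
    ultimately show ?thesis by blast
  qed
next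
  assume "A x \<or> (G x \<and> \<not> A x \<and> ys \<in> reached_while G A)"
  then show "x # ys \<in> reached_while G A"
  proof
    assume "A x"
    then show ?thesis by (auto simp: reached_while_def intro!: exI[of _ 0])
  next
    assume h: "G x \<and> \<not> A x \<and> ys \<in> reached_while G A"
    then obtain t where "t < length ys" "A (ys!t)" "\<forall>s<t. G (ys!s) \<and> \<not> A (ys!s)"
      by (auto simp: reached_while_def)
    then show ?thesis unfolding reached_while_def using h
      by (intro CollectI exI[of _ "Suc t"]) (auto simp: less_Suc_eq_0_disj)
  qed
qed

lemma emeasure_run_Suc_reached_while:
  "emeasure (run p n x (Suc N)) (reached_while G A) =
    (if A x then 1 else if G x then \<integral>\<^sup>+y. emeasure (run p n y N) (reached_while G A) \<partial>step p n x else 0)"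
proof -
  have "emeasure (run p n x (Suc N)) (reached_while G A) =
      (\<integral>\<^sup>+y. emeasure (run p n y N) ((#) x -` reached_while G A) \<partial>step p n x)"
    by (simp only: run_Suc_first_step emeasure_bind_pmf emeasure_map_pmf)
  moreover have "(#) x -` reached_while G A =
      (if A x then UNIV else if G x then reached_while G A else {})"
    by (auto simp: Cons_in_reached_while_iff)
  ultimately show ?thesis
    by (simp add: measure_pmf.emeasure_space_1[simplified])
qed

lemma emeasure_reached_while_le:
  fixes F :: "nat \<Rightarrow> config \<Rightarrow> real"
  assumes Inv_step: "\<And>x y. Inv x \<Longrightarrow> y \<in> set_pmf (step p n x) \<Longrightarrow> Inv y"
    and supermartingale: "\<And>t x. Inv x \<Longrightarrow> G x \<Longrightarrow> \<not> A x \<Longrightarrow> t < T \<Longrightarrow>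
        (\<integral>\<^sup>+y. ennreal (F (Suc t) y) \<partial>step p n x) \<le> ennreal (F t x)"
    and target: "\<And>t x. Inv x \<Longrightarrow> A x \<Longrightarrow> t \<le> T \<Longrightarrow> m \<le> F t x"
    and "Inv x" "j + N \<le> T"
  shows "ennreal m * emeasure (run p n x N) (reached_while G A) \<le> ennreal (F j x)"
  using \<open>Inv x\<close> \<open>j + N \<le> T\<close>
proof (induction N arbitrary: x j)
  case 0
  then show ?case
    using target[of x j] by (cases "A x") (auto simp: reached_while_def ennreal_leI indicator_def)
next
  case (Suc N)
  show ?case
  proof (cases "\<not> A x \<and> G x")
    case True
    have "ennreal m * emeasure (run p n x (Suc N)) (reached_while G A) =
        (\<integral>\<^sup>+y. ennreal m * emeasure (run p n y N) (reached_while G A) \<partial>step p n x)"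
      unfolding emeasure_run_Suc_reached_while using True by (simp add: nn_integral_cmult)
    also have "\<dots> \<le> (\<integral>\<^sup>+y. ennreal (F (Suc j) y) \<partial>step p n x)"
      using Suc.IH[of _ "Suc j"] Inv_step[OF Suc.prems(1)] Suc.prems(2)
      by (intro nn_integral_mono_AE AE_pmfI) auto
    also have "\<dots> \<le> ennreal (F j x)"
      using supermartingale[OF Suc.prems(1)] True Suc.prems(2) by simp
    finally show ?thesis .
  next
    case False
    then show ?thesis
      unfolding emeasure_run_Suc_reached_while using target[OF Suc.prems(1), of j] Suc.prems(2)
      by (auto simp: ennreal_leI)
  qed
qed

lemma prob_reached_while_le_exp:
  fixes f :: "config \<Rightarrow> real"
  assumes Inv_step: "\<And>x y. Inv x \<Longrightarrow> y \<in> set_pmf (step p n x) \<Longrightarrow> Inv y"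
    and drift: "\<And>x. Inv x \<Longrightarrow> G x \<Longrightarrow> \<not> A x \<Longrightarrow>
      (\<integral>\<^sup>+y. ennreal (exp (f y)) \<partial>step p n x) \<le> ennreal (exp (f x + D))"
    and target: "\<And>x. Inv x \<Longrightarrow> A x \<Longrightarrow> h \<le> f x"
    and "0 \<le> D" "Inv x0"
  shows "measure_pmf.prob (run p n x0 N) (reached_while G A) \<le> exp (f x0 - h + real N * D)"
proof -
  define F where "F = (\<lambda>t y. exp (f y - real t * D))"
  have "ennreal (exp (h - real N * D)) * emeasure (run p n x0 N) (reached_while G A)
      \<le> ennreal (F 0 x0)"
  proof (rule emeasure_reached_while_le[where Inv=Inv and T=N])
    fix t x assume "Inv x" "G x" "\<not> A x"
    have "(\<integral>\<^sup>+y. ennreal (F (Suc t) y) \<partial>step p n x) =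
        (\<integral>\<^sup>+y. ennreal (exp (f y)) * ennreal (exp (- real (Suc t) * D)) \<partial>step p n x)"
      by (intro nn_integral_cong) (simp add: F_def ennreal_mult[symmetric] exp_add[symmetric] algebra_simps)
    also have "\<dots> = (\<integral>\<^sup>+y. ennreal (exp (f y)) \<partial>step p n x) * ennreal (exp (- real (Suc t) * D))"
      by (simp add: nn_integral_multc)
    also have "\<dots> \<le> ennreal (exp (f x + D)) * ennreal (exp (- real (Suc t) * D))"
      using drift[OF \<open>Inv x\<close> \<open>G x\<close> \<open>\<not> A x\<close>] by (intro mult_right_mono) auto
    also have "\<dots> = ennreal (F t x)"
      by (simp add: F_def ennreal_mult[symmetric] mult_exp_exp algebra_simps)
    finally show "(\<integral>\<^sup>+y. ennreal (F (Suc t) y) \<partial>step p n x) \<le> ennreal (F t x)" .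
  next
    fix t x assume "Inv x" "A x" "t \<le> N"
    then have "real t * D \<le> real N * D" using \<open>0 \<le> D\<close> by (intro mult_right_mono) auto
    then show "exp (h - real N * D) \<le> F t x" using target[OF \<open>Inv x\<close> \<open>A x\<close>] by (simp add: F_def)
  qed (use assms in auto)
  then have "exp (h - real N * D) * measure_pmf.prob (run p n x0 N) (reached_while G A) \<le> F 0 x0"
    by (simp add: measure_pmf.emeasure_eq_measure ennreal_mult[symmetric] F_def)
  then show ?thesis
    by (simp add: F_def field_simps exp_diff exp_add)
qed

definition opinion_count :: "nat \<Rightarrow> config \<Rightarrow> nat \<Rightarrow> nat" where
  "opinion_count n x i = card {v\<in>{..<n}. x v = i}"

definition collisions :: "nat \<Rightarrow> config \<Rightarrow> real" where
  "collisions n x = (\<Sum>w<n. real (opinion_count n x (x w)))"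

definition valid_config :: "nat \<Rightarrow> nat \<Rightarrow> config \<Rightarrow> bool" where
  "valid_config n k x \<longleftrightarrow> (\<forall>v<n. x v \<in> {1..k})"

lemma alpha_eq_opinion_count: "alpha n x i = real (opinion_count n x i) / real n"
  by (simp add: alpha_def opinion_count_def)

lemma alpha_le_mult_alpha_iff:
  "n > 0 \<Longrightarrow> alpha n x i \<le> a * alpha n y j \<longleftrightarrow>
     real (opinion_count n x i) \<le> a * real (opinion_count n y j)"
  unfolding alpha_eq_opinion_count times_divide_eq_right by (simp add: divide_le_cancel)

lemma mult_alpha_le_alpha_iff:
  "n > 0 \<Longrightarrow> a * alpha n y j \<le> alpha n x i \<longleftrightarrow>
     a * real (opinion_count n y j) \<le> real (opinion_count n x i)"
  unfolding alpha_eq_opinion_count times_divide_eq_right by (simp add: divide_le_cancel)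

lemma opinion_count_le: "opinion_count n x i \<le> n"
proof -
  have "opinion_count n x i \<le> card {..<n}" unfolding opinion_count_def by (intro card_mono) auto
  then show ?thesis by simp
qed

lemma sum_if_opinion_eq:
  "(\<Sum>w<n. (if x w = j then a else b) :: real) =
     real (opinion_count n x j) * a + (real n - real (opinion_count n x j)) * b"
proof -
  have count: "(\<Sum>w<n. (if x w = j then 1 else 0) :: real) = real (opinion_count n x j)"
    by (simp add: sum.If_cases Int_def opinion_count_def)
  have "(\<Sum>w<n. (if x w = j then a else b) :: real) = (\<Sum>w<n. b + (a - b) * (if x w = j then 1 else 0))"
    by (intro sum.cong) auto
  also have "\<dots> = real n * b + (a - b) * real (opinion_count n x j)"
    by (simp add: sum.distrib sum_distrib_left[symmetric] count)
  finally show ?thesis by (simp add: algebra_simps)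
qed

lemma prod_if_opinion_eq:
  "(\<Prod>v<n. (if x v = i then a else b) :: real) = a ^ opinion_count n x i * b ^ (n - opinion_count n x i)"
proof -
  let ?I = "{v\<in>{..<n}. x v = i}"
  have "{..<n} \<inter> {v. x v = i} = ?I" "{..<n} - {v. x v = i} = {..<n} - ?I" by auto
  moreover have "card ({..<n} - ?I) = n - card ?I" by (subst card_Diff_subset) auto
  ultimately show ?thesis by (simp add: prod.If_cases Diff_eq[symmetric] opinion_count_def)
qed

lemma collisions_eq_gamma:
  assumes "n > 0" "valid_config n k x"
  shows "collisions n x = real n^2 * gamma n k x"
proof -
  have "collisions n x = (\<Sum>j\<in>{1..k}. (\<Sum>w\<in>{w\<in>{..<n}. x w = j}. real (opinion_count n x (x w))))"
    unfolding collisions_def using assms(2) by (intro sum.group[symmetric]) (auto simp: valid_config_def)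
  also have "\<dots> = (\<Sum>j\<in>{1..k}. real (opinion_count n x j)^2)"
    by (intro sum.cong refl) (simp add: opinion_count_def power2_eq_square)
  also have "\<dots> = real n^2 * gamma n k x"
    using assms(1) by (simp add: gamma_def alpha_eq_opinion_count power_divide sum_distrib_left)
  finally show ?thesis .
qed

lemma opinion_count_sq_le_collisions: "real (opinion_count n x i)^2 \<le> collisions n x"
proof -
  have "real (opinion_count n x i)^2 = (\<Sum>w<n. if x w = i then real (opinion_count n x i) else 0)"
    by (simp add: sum_if_opinion_eq power2_eq_square)
  also have "\<dots> \<le> collisions n x" unfolding collisions_def by (intro sum_mono) auto
  finally show ?thesis .
qed

lemma collisions_le: "collisions n x \<le> real n^2"
proof -
  have "collisions n x \<le> (\<Sum>w<n. real n)"
    unfolding collisions_def using opinion_count_le by (intro sum_mono) auto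
  then show ?thesis by (simp add: power2_eq_square)
qed

lemma collisions_le_if_not_weak:
  assumes "n > 0" "valid_config n k x" "cw < 1" "\<not> alpha n x i \<le> (1 - cw) * gamma n k x"
  shows "collisions n x \<le> (1 + cw / (1 - cw)) * real n * real (opinion_count n x i)"
proof -
  have "(1 - cw) * gamma n k x * real n^2 < real (opinion_count n x i) / real n * real n^2"
    using assms by (intro mult_strict_right_mono) (auto simp: alpha_eq_opinion_count)
  then show ?thesis using assms by (simp add: collisions_eq_gamma power2_eq_square field_simps)
qed

lemma set_pmf_unif: "n > 0 \<Longrightarrow> set_pmf (unif n) = {..<n}"
  unfolding unif_def by (subst set_pmf_of_set) auto

lemma valid_config_step: "valid_config n k x \<Longrightarrow> y \<in> set_pmf (step p n x) \<Longrightarrow> valid_config n k y"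
proof (unfold valid_config_def, intro allI impI)
  fix v assume x: "\<forall>v<n. x v \<in> {1..k}" and y: "y \<in> set_pmf (step p n x)" and "v < n"
  then have "y v \<in> set_pmf (vertex_update p n x v)"
    by (auto simp: step_def set_Pi_pmf PiE_dflt_def)
  then have "y v \<in> x ` {..<n}"
    using \<open>v < n\<close> by (cases p) (auto simp: vertex_update_def set_pmf_unif)
  then show "y v \<in> {1..k}" using x by auto
qed

lemma expectation_unif: "n > 0 \<Longrightarrow> measure_pmf.expectation (unif n) f = (\<Sum>w<n. f w) / real n"
  unfolding unif_def by (subst integral_pmf_of_set) auto

lemma pmf_vertex_update_ThreeMajority:
  assumes "n > 0"
  shows "pmf (vertex_update ThreeMajority n x v) i =
    (real n * real (opinion_count n x i)^2 + (real n^2 - collisions n x) * real (opinion_count n x i))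
      / real n^3"
proof -
  define X where "X = real (opinion_count n x i)"
  define adopts_i where "adopts_i w1 w2 w3 = (indicator {i} (if x w1 = x w2 then x w1 else x w3) :: real)"
    for w1 w2 w3
  have inner: "(\<Sum>w3<n. adopts_i w1 w2 w3) = (if x w2 = x w1 then (if x w1 = i then real n else 0) else X)"
    for w1 w2
  proof (cases "x w1 = x w2")
    case False
    then have "(\<Sum>w3<n. adopts_i w1 w2 w3) = (\<Sum>w3<n. if x w3 = i then 1 else 0)"
      by (intro sum.cong) (auto simp: adopts_i_def indicator_def)
    then show ?thesis using False by (simp add: sum_if_opinion_eq X_def)
  qed (auto simp: adopts_i_def indicator_def)
  have "(\<Sum>w1<n. real (opinion_count n x (x w1)) * (if x w1 = i then real n else 0)) =
      (\<Sum>w1<n. if x w1 = i then real n * X else 0)"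
    by (intro sum.cong) (auto simp: X_def)
  also have "\<dots> = X * (real n * X)"
    by (simp add: sum_if_opinion_eq X_def)
  finally have "(\<Sum>w1<n. \<Sum>w2<n. \<Sum>w3<n. adopts_i w1 w2 w3) = real n * X^2 + (real n^2 - collisions n x) * X"
    unfolding inner sum_if_opinion_eq sum.distrib
    by (simp add: collisions_def sum_distrib_left[symmetric] sum_distrib_right[symmetric] sum_subtractf
          algebra_simps power2_eq_square)
  moreover have "pmf (vertex_update ThreeMajority n x v) i =
      (\<Sum>w1<n. \<Sum>w2<n. \<Sum>w3<n. adopts_i w1 w2 w3) / real n^3"
    using assms
    by (simp add: vertex_update_def pmf_bind expectation_unif adopts_i_def sum_divide_distrib
        power3_eq_cube)
  ultimately show ?thesis by (simp add: X_def)
qed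

lemma pmf_vertex_update_TwoChoices:
  assumes "n > 0"
  shows "pmf (vertex_update TwoChoices n x v) i =
    (real (opinion_count n x i)^2 + (real n^2 - collisions n x) * (if x v = i then 1 else 0)) / real n^2"
proof -
  define X where "X = real (opinion_count n x i)"
  define B where "B = (if x v = i then 1 else 0 :: real)"
  define adopts_i where "adopts_i w1 w2 = (indicator {i} (if x w1 = x w2 then x w1 else x v) :: real)" for w1 w2
  have inner: "(\<Sum>w2<n. adopts_i w1 w2) =
      real (opinion_count n x (x w1)) * (if x w1 = i then 1 else 0)
      + (real n - real (opinion_count n x (x w1))) * B" for w1
  proof -
    have "(\<Sum>w2<n. adopts_i w1 w2) = (\<Sum>w2<n. if x w2 = x w1 then (if x w1 = i then 1 else 0) else B)"
      by (intro sum.cong) (auto simp: indicator_def B_def adopts_i_def)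
    then show ?thesis by (simp add: sum_if_opinion_eq)
  qed
  have "(\<Sum>w1<n. real (opinion_count n x (x w1)) * (if x w1 = i then 1 else 0)) =
      (\<Sum>w1<n. if x w1 = i then X else 0)"
    by (intro sum.cong) (auto simp: X_def)
  also have "\<dots> = X * X"
    by (simp add: sum_if_opinion_eq X_def)
  finally have "(\<Sum>w1<n. \<Sum>w2<n. adopts_i w1 w2) = X^2 + (real n^2 - collisions n x) * B"
    unfolding inner sum.distrib
    by (simp add: collisions_def sum_distrib_left[symmetric] sum_distrib_right[symmetric] sum_subtractf
          algebra_simps power2_eq_square)
  moreover have "pmf (vertex_update TwoChoices n x v) i = (\<Sum>w1<n. \<Sum>w2<n. adopts_i w1 w2) / real n^2"
    using assms
    by (simp add: vertex_update_def pmf_bind expectation_unif adopts_i_def sum_divide_distrib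
        power2_eq_square)
  ultimately show ?thesis by (simp add: X_def B_def)
qed

lemma one_plus_exp_minus_one_mult_nonneg:
  fixes q :: real assumes "0 \<le> q" "q \<le> 1"
  shows "0 \<le> 1 + (exp \<mu> - 1) * q"
proof (cases "exp \<mu> \<ge> 1")
  case False
  then have "(exp \<mu> - 1) * 1 \<le> (exp \<mu> - 1) * q"
    using assms by (intro mult_left_mono_neg) auto
  then show ?thesis by (smt (verit) exp_gt_zero)
qed (use assms in simp)

lemma nn_integral_exp_indicator:
  fixes M :: "nat pmf"
  shows "(\<integral>\<^sup>+w. ennreal (exp (\<mu> * indicator {i} w)) \<partial>M) = ennreal (1 + (exp \<mu> - 1) * pmf M i)"
proof -
  have "(\<lambda>w. exp (\<mu> * indicator {i} w)) = (\<lambda>w. 1 + (exp \<mu> - 1) * indicator {i} w)"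
    by (auto simp: indicator_def)
  moreover have "integrable M (\<lambda>w. 1 + (exp \<mu> - 1) * indicat_real {i} w)"
    by (rule measure_pmf.integrable_const_bound[where B="1 + \<bar>exp \<mu> - 1\<bar>"])
      (auto simp: indicator_def)
  ultimately show ?thesis
    using measure_pmf.integrable_const_bound[where M=M and f="indicat_real {i}" and B=1]
    by (subst nn_integral_eq_integral) (auto simp: measure_pmf_single)
qed

text \<open>The opinions of distinct vertices after a step are independent, so the moment generating
  function of the new count factorises over the vertices.\<close>
lemma mgf_opinion_count_step:
  "(\<integral>\<^sup>+y. ennreal (exp (\<mu> * real (opinion_count n y i))) \<partial>step p n x) =
     ennreal (\<Prod>v<n. 1 + (exp \<mu> - 1) * pmf (vertex_update p n x v) i)"
proof -
  have "ennreal (exp (\<mu> * real (opinion_count n y i))) = (\<Prod>v<n. ennreal (exp (\<mu> * indicator {i} (y v))))"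
    for y
    using sum_if_opinion_eq[where x=y and j=i and a=1 and b=0 and n=n]
    by (simp add: prod_ennreal exp_sum[symmetric] sum_distrib_left[symmetric] indicator_def of_bool_def)
  then have "(\<integral>\<^sup>+y. ennreal (exp (\<mu> * real (opinion_count n y i))) \<partial>step p n x) =
     (\<Prod>v<n. \<integral>\<^sup>+w. ennreal (exp (\<mu> * indicator {i} w)) \<partial>vertex_update p n x v)"
    unfolding step_def
    by (simp only:) (rule nn_integral_prod_Pi_pmf[where f="\<lambda>v w. ennreal (exp (\<mu> * indicator {i} w))"]; simp)
  also have "\<dots> = ennreal (\<Prod>v<n. 1 + (exp \<mu> - 1) * pmf (vertex_update p n x v) i)"
    by (simp add: nn_integral_exp_indicator prod_ennreal one_plus_exp_minus_one_mult_nonneg pmf_le_1)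
  finally show ?thesis .
qed

lemma mgf_opinion_count_step_le:
  "(\<integral>\<^sup>+y. ennreal (exp (\<mu> * real (opinion_count n y i))) \<partial>step p n x) \<le>
     ennreal (exp ((exp \<mu> - 1) * (\<Sum>v<n. pmf (vertex_update p n x v) i)))"
proof -
  have "(\<Prod>v<n. 1 + (exp \<mu> - 1) * pmf (vertex_update p n x v) i) \<le>
      (\<Prod>v<n. exp ((exp \<mu> - 1) * pmf (vertex_update p n x v) i))"
    by (intro prod_mono conjI exp_ge_add_one_self one_plus_exp_minus_one_mult_nonneg)
      (auto simp: pmf_le_1)
  also have "\<dots> = exp ((exp \<mu> - 1) * (\<Sum>v<n. pmf (vertex_update p n x v) i))"
    by (simp add: exp_sum sum_distrib_left)
  finally show ?thesis unfolding mgf_opinion_count_step by (simp add: ennreal_leI)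
qed

lemma exp_minus_one_le: "0 \<le> (x::real) \<Longrightarrow> x \<le> 1 \<Longrightarrow> exp x - 1 \<le> x + x^2"
  using exp_bound[of x] by simp

lemma one_minus_exp_neg_ge: "0 \<le> (x::real) \<Longrightarrow> x - x^2 \<le> 1 - exp (-x)"
proof -
  assume x: "0 \<le> x"
  have "exp (-x) \<le> 1 / (1 + x)"
    using x exp_ge_add_one_self[of x] by (simp add: exp_minus field_simps)
  also have "\<dots> \<le> 1 - x + x^2"
    using x by (simp add: field_simps power2_eq_square)
  finally show ?thesis by simp
qed

lemma power_le_exp_mult:
  fixes g a :: real
  assumes "0 \<le> g" "g \<le> exp a"
  shows "g ^ m \<le> exp (real m * a)"
  using power_mono[OF assms(2,1), of m] by (simp add: exp_of_nat_mult)

lemma sum_pmf_vertex_update_ThreeMajority: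
  assumes "n > 0"
  shows "(\<Sum>v<n. pmf (vertex_update ThreeMajority n x v) i) =
    real (opinion_count n x i) + real (opinion_count n x i)^2 / n
      - collisions n x * real (opinion_count n x i) / n^2"
  using assms by (simp add: pmf_vertex_update_ThreeMajority field_simps power2_eq_square power3_eq_cube)

lemma sum_pmf_vertex_update_ThreeMajority_le:
  assumes "n > 0"
  shows "(\<Sum>v<n. pmf (vertex_update ThreeMajority n x v) i) \<le>
    real (opinion_count n x i) + real (opinion_count n x i)^2 / n"
  using order_trans[OF zero_le_power2 opinion_count_sq_le_collisions]
  by (simp add: sum_pmf_vertex_update_ThreeMajority[OF assms])

lemma sum_pmf_vertex_update_ThreeMajority_ge:
  assumes "n > 0" and S: "collisions n x \<le> (1 + \<kappa>) * real n * real (opinion_count n x i)"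
  shows "real (opinion_count n x i) - \<kappa> * real (opinion_count n x i)^2 / n \<le>
    (\<Sum>v<n. pmf (vertex_update ThreeMajority n x v) i)"
proof -
  define X where "X = real (opinion_count n x i)"
  have "collisions n x * X / n^2 \<le> (1 + \<kappa>) * n * X * X / n^2"
    using S by (intro divide_right_mono mult_right_mono) (auto simp: X_def)
  also have "\<dots> = X^2 / n + \<kappa> * X^2 / n"
    using assms(1) by (simp add: field_simps power2_eq_square)
  finally show ?thesis
    by (simp add: sum_pmf_vertex_update_ThreeMajority[OF assms(1)] flip: X_def)
qed

lemma mgf_ThreeMajority_up:
  assumes "n > 0" "0 \<le> l" "l \<le> 1" and X: "real (opinion_count n x i) \<le> M"
  shows "(\<integral>\<^sup>+y. ennreal (exp (l * real (opinion_count n y i))) \<partial>step ThreeMajority n x) \<le>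
     ennreal (exp (l * real (opinion_count n x i) + (l * M^2 / n + 2 * l^2 * M)))"
proof -
  define X where "X = real (opinion_count n x i)"
  have X_bounds: "0 \<le> X" "X \<le> real n" "X \<le> M"
    using opinion_count_le[of n x i] X by (auto simp: X_def)
  have "(exp l - 1) * (\<Sum>v<n. pmf (vertex_update ThreeMajority n x v) i) \<le> (l + l^2) * (X + X^2 / n)"
    using exp_minus_one_le[of l] sum_pmf_vertex_update_ThreeMajority_le[OF assms(1), of x i] assms
    by (intro mult_mono) (auto simp: X_def intro: sum_nonneg)
  also have "\<dots> = l * X + l * (X^2 / n) + l^2 * X + l^2 * (X^2 / n)"
    by (simp add: algebra_simps add_divide_distrib)
  also have "\<dots> \<le> l * X + l * (M^2 / n) + l^2 * M + l^2 * M"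
  proof -
    have "X^2 / n \<le> X"
      using X_bounds assms(1) by (simp add: field_simps power2_eq_square mult_left_mono)
    then have "l^2 * (X^2 / n) \<le> l^2 * M"
      using X_bounds by (intro mult_left_mono) auto
    moreover have "l * (X^2 / n) \<le> l * (M^2 / n)"
      using X_bounds assms(2) by (intro mult_left_mono divide_right_mono power_mono) auto
    moreover have "l^2 * X \<le> l^2 * M"
      using X_bounds by (intro mult_left_mono) auto
    ultimately show ?thesis by linarith
  qed
  finally have "(exp l - 1) * (\<Sum>v<n. pmf (vertex_update ThreeMajority n x v) i) \<le>
      l * X + (l * M^2 / n + 2 * l^2 * M)" by (simp add: algebra_simps)
  then show ?thesis
    using mgf_opinion_count_step_le[where \<mu>=l and p=ThreeMajority and n=n and x=x and i=i]
    by (elim order_trans) (simp add: X_def ennreal_leI)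
qed

lemma mgf_ThreeMajority_down:
  assumes "n > 0" "0 \<le> l" "0 \<le> \<kappa>" "\<kappa> \<le> 1" and X: "real (opinion_count n x i) \<le> M"
    and S: "collisions n x \<le> (1 + \<kappa>) * real n * real (opinion_count n x i)"
  shows "(\<integral>\<^sup>+y. ennreal (exp ((-l) * real (opinion_count n y i))) \<partial>step ThreeMajority n x) \<le>
     ennreal (exp ((-l) * real (opinion_count n x i) + (l^2 * M + l * \<kappa> * M^2 / n)))"
proof -
  define X where "X = real (opinion_count n x i)"
  have X_bounds: "0 \<le> X" "X \<le> real n" "X \<le> M"
    using opinion_count_le[of n x i] X by (auto simp: X_def)
  have "X^2 / n \<le> X"
    using X_bounds assms(1) by (simp add: field_simps power2_eq_square mult_left_mono)
  define L where "L = X - \<kappa> * X^2 / n"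
  have "0 \<le> \<kappa> * X^2 / n" using assms(3) by simp
  then have L_bounds: "0 \<le> L" "L \<le> M"
    using mult_mono[OF \<open>\<kappa> \<le> 1\<close> \<open>X^2 / n \<le> X\<close>] X_bounds by (auto simp: L_def)
  have "(exp (-l) - 1) * (\<Sum>v<n. pmf (vertex_update ThreeMajority n x v) i) \<le> (exp (-l) - 1) * L"
    using sum_pmf_vertex_update_ThreeMajority_ge[OF assms(1) S] assms(2)
    by (intro mult_left_mono_neg) (auto simp: L_def X_def)
  also have "\<dots> \<le> -(l - l^2) * L"
    using L_bounds one_minus_exp_neg_ge[OF assms(2)] by (intro mult_right_mono) auto
  also have "\<dots> = -l * X + l * \<kappa> * (X^2 / n) + l^2 * L"
    by (simp add: L_def algebra_simps diff_divide_distrib)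
  also have "\<dots> \<le> -l * X + l * \<kappa> * (M^2 / n) + l^2 * M"
  proof -
    have "l * \<kappa> * (X^2 / n) \<le> l * \<kappa> * (M^2 / n)"
      using assms X_bounds by (intro mult_left_mono divide_right_mono power_mono) auto
    moreover have "l^2 * L \<le> l^2 * M"
      using L_bounds by (intro mult_left_mono) auto
    ultimately show ?thesis by linarith
  qed
  finally have "(exp (-l) - 1) * (\<Sum>v<n. pmf (vertex_update ThreeMajority n x v) i) \<le>
      -l * X + (l^2 * M + l * \<kappa> * M^2 / n)" by simp
  then show ?thesis
    using mgf_opinion_count_step_le[where \<mu>="-l" and p=ThreeMajority and n=n and x=x and i=i]
    by (elim order_trans) (simp add: X_def ennreal_leI)
qed

text \<open>Under 2-Choices a vertex holding \<open>i\<close> keeps it unless its two samples agree on another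
  opinion, and any other vertex adopts \<open>i\<close> only if both samples hold \<open>i\<close>.\<close>
lemma mgf_TwoChoices_le:
  fixes x :: config and i :: nat
  assumes "n > 0"
  defines "X \<equiv> real (opinion_count n x i)"
  assumes keep: "1 + (exp \<mu> - 1) * (1 - (collisions n x - X^2) / real n^2) \<le> exp a"
  shows "(\<integral>\<^sup>+y. ennreal (exp (\<mu> * real (opinion_count n y i))) \<partial>step TwoChoices n x) \<le>
    ennreal (exp (X * a + (real n - X) * ((exp \<mu> - 1) * (X^2 / real n^2))))"
proof -
  define q_same where "q_same = 1 - (collisions n x - X^2) / real n^2"
  define q_other where "q_other = X^2 / real n^2"
  have "collisions n x \<le> real n^2 + X^2"
    using collisions_le[of n x] zero_le_power2[of X] by linarith
  then have q_same: "0 \<le> q_same" "q_same \<le> 1"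
    using opinion_count_sq_le_collisions[of n x i] assms(1) by (auto simp: q_same_def X_def field_simps)
  have q_other: "0 \<le> q_other" "q_other \<le> 1"
    using opinion_count_le[of n x i] assms(1) by (auto simp: q_other_def X_def power_mono)
  have "(\<Prod>v<n. 1 + (exp \<mu> - 1) * pmf (vertex_update TwoChoices n x v) i) =
     (\<Prod>v<n. if x v = i then 1 + (exp \<mu> - 1) * q_same else 1 + (exp \<mu> - 1) * q_other)"
    using assms(1) by (intro prod.cong) (auto simp: pmf_vertex_update_TwoChoices q_same_def
        q_other_def X_def field_simps)
  also have "\<dots> = (1 + (exp \<mu> - 1) * q_same) ^ opinion_count n x i *
      (1 + (exp \<mu> - 1) * q_other) ^ (n - opinion_count n x i)"
    by (rule prod_if_opinion_eq)
  also have "\<dots> \<le> exp (real (opinion_count n x i) * a) *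
      exp (real (n - opinion_count n x i) * ((exp \<mu> - 1) * q_other))"
    using q_same q_other keep exp_ge_add_one_self[of "(exp \<mu> - 1) * q_other"]
    by (intro mult_mono power_le_exp_mult)
      (auto simp: q_same_def intro!: zero_le_power one_plus_exp_minus_one_mult_nonneg)
  also have "\<dots> = exp (X * a + (real n - X) * ((exp \<mu> - 1) * (X^2 / real n^2)))"
    using opinion_count_le[of n x i] by (simp add: X_def q_other_def of_nat_diff mult_exp_exp)
  finally show ?thesis by (simp add: mgf_opinion_count_step ennreal_leI)
qed

lemma mgf_TwoChoices_up:
  assumes "n > 0" "0 \<le> l" "l \<le> 1" and X: "real (opinion_count n x i) \<le> M"
  shows "(\<integral>\<^sup>+y. ennreal (exp (l * real (opinion_count n y i))) \<partial>step TwoChoices n x) \<le>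
     ennreal (exp (l * real (opinion_count n x i) + (l + l^2) * M^2 / n))"
proof -
  define X where "X = real (opinion_count n x i)"
  have X_bounds: "0 \<le> X" "X \<le> real n" "X \<le> M"
    using opinion_count_le[of n x i] X by (auto simp: X_def)
  have "(exp l - 1) * (1 - (collisions n x - X^2) / real n^2) \<le> (exp l - 1) * 1"
    using opinion_count_sq_le_collisions[of n x i] assms(2)
    by (intro mult_left_mono) (auto simp: X_def)
  then have keep: "1 + (exp l - 1) * (1 - (collisions n x - X^2) / real n^2) \<le> exp l" by simp
  have "(real n - X) * ((exp l - 1) * (X^2 / real n^2)) \<le> real n * ((l + l^2) * (X^2 / real n^2))"
    using X_bounds exp_minus_one_le[of l] assms by (intro mult_mono) (auto intro: mult_right_mono)
  also have "\<dots> = (l + l^2) * (X^2 / real n)"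
    using assms(1) by (simp add: power2_eq_square)
  also have "\<dots> \<le> (l + l^2) * (M^2 / real n)"
    using X_bounds assms by (intro mult_left_mono divide_right_mono power_mono) auto
  finally show ?thesis
    using mgf_TwoChoices_le[OF assms(1) keep[unfolded X_def]]
    by (elim order_trans) (simp add: ennreal_leI X_def mult.commute)
qed

text \<open>\<open>S\<close> stands for the number of collisions, so that \<open>(S - X^2) / n^2\<close> is the probability
  that a vertex holding \<open>i\<close> loses it under 2-Choices.\<close>
lemma TwoChoices_down_exponent_le:
  fixes X n l M \<kappa> S :: real
  assumes "0 < n" "0 \<le> X" "X \<le> n" "0 \<le> l" "l \<le> 1" "X \<le> M" "0 \<le> \<kappa>" "\<kappa> \<le> 1"
    and "S \<le> (1 + \<kappa>) * n * X" and "X^2 \<le> S"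
  shows "X * (-l + ((S - X^2) / n^2) * (exp l - 1)) + (n - X) * ((exp (-l) - 1) * (X^2 / n^2)) \<le>
     -l * X + (l * \<kappa> + 3 * l^2) * M^2 / n"
proof -
  define r where "r = (S - X^2) / n^2"
  have r_nonneg: "0 \<le> r" using assms by (simp add: r_def)
  define P where "P = X * S / n^2"
  have P: "P \<le> X^2 / n + \<kappa> * X^2 / n"
  proof -
    have "X * S / n^2 \<le> X * ((1 + \<kappa>) * n * X) / n^2"
      using assms by (intro divide_right_mono mult_left_mono) auto
    also have "\<dots> = X^2 / n + \<kappa> * X^2 / n" using assms by (simp add: field_simps power2_eq_square)
    finally show ?thesis by (simp add: P_def)
  qed
  have A: "X * r * (exp l - 1) \<le> X * r * (l + l^2)"
    using exp_minus_one_le r_nonneg assms by (intro mult_left_mono) auto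
  have B: "(n - X) * ((exp (-l) - 1) * (X^2 / n^2)) \<le> (n - X) * (-(l - l^2) * (X^2 / n^2))"
    using one_minus_exp_neg_ge[OF assms(4)] assms by (intro mult_left_mono mult_right_mono) auto
  have "X * (-l + r * (exp l - 1)) + (n - X) * ((exp (-l) - 1) * (X^2 / n^2)) \<le>
        -l * X + X * r * (l + l^2) + (n - X) * (-(l - l^2) * (X^2 / n^2))"
    using A B by (simp add: algebra_simps)
  also have "\<dots> = -l * X + l * (P - X^2 / n) + l^2 * (P - 2 * X^3 / n^2 + X^2 / n)"
    using assms by (simp add: r_def P_def field_simps power2_eq_square power3_eq_cube)
  also have "\<dots> \<le> -l * X + l * (\<kappa> * X^2 / n) + l^2 * (3 * X^2 / n)"
  proof -
    have lin: "l * (P - X^2 / n) \<le> l * (\<kappa> * X^2 / n)" using P assms by (intro mult_left_mono) auto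
    have "\<kappa> * X^2 / n \<le> X^2 / n"
      using assms by (intro divide_right_mono mult_left_le_one_le) auto
    moreover have "0 \<le> X^3 / n^2" using assms by simp
    ultimately have "P - 2 * X^3 / n^2 + X^2 / n \<le> 3 * X^2 / n"
      using P by linarith
    then have "l^2 * (P - 2 * X^3 / n^2 + X^2 / n) \<le> l^2 * (3 * X^2 / n)"
      by (intro mult_left_mono) auto
    with lin show ?thesis by linarith
  qed
  also have "\<dots> = -l * X + (l * \<kappa> + 3 * l^2) * (X^2 / n)" by (simp add: algebra_simps)
  also have "\<dots> \<le> -l * X + (l * \<kappa> + 3 * l^2) * (M^2 / n)"
    using assms by (intro add_left_mono mult_left_mono divide_right_mono power_mono) auto
  finally show ?thesis by (simp add: r_def)
qed

lemma mgf_TwoChoices_down: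
  assumes "n > 0" "0 \<le> l" "l \<le> 1" "0 \<le> \<kappa>" "\<kappa> \<le> 1" and X: "real (opinion_count n x i) \<le> M"
    and S: "collisions n x \<le> (1 + \<kappa>) * real n * real (opinion_count n x i)"
  shows "(\<integral>\<^sup>+y. ennreal (exp ((-l) * real (opinion_count n y i))) \<partial>step TwoChoices n x) \<le>
     ennreal (exp ((-l) * real (opinion_count n x i) + (l * \<kappa> + 3 * l^2) * M^2 / n))"
proof -
  define X where "X = real (opinion_count n x i)"
  define r where "r = (collisions n x - X^2) / real n^2"
  have "1 + (exp (-l) - 1) * (1 - r) = exp (-l) * (1 + r * (exp l - 1))"
    by (simp add: algebra_simps exp_minus_inverse mult_exp_exp[symmetric])
  also have "\<dots> \<le> exp (-l) * exp (r * (exp l - 1))"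
    by (intro mult_left_mono) auto
  finally have keep: "1 + (exp (-l) - 1) * (1 - r) \<le> exp (-l + r * (exp l - 1))"
    by (simp add: mult_exp_exp)
  have "X * (-l + r * (exp l - 1)) + (real n - X) * ((exp (-l) - 1) * (X^2 / real n^2)) \<le>
      -l * X + (l * \<kappa> + 3 * l^2) * M^2 / n"
    using TwoChoices_down_exponent_le[of "real n" X l M \<kappa> "collisions n x"] assms
      opinion_count_le[of n x i] opinion_count_sq_le_collisions[of n x i]
    by (simp add: r_def X_def)
  then show ?thesis
    using mgf_TwoChoices_le[OF assms(1) keep[unfolded r_def X_def]]
    by (elim order_trans) (simp add: ennreal_leI r_def X_def)
qed

lemma prob_ThreeMajority_up:
  assumes pos: "0 < cu" "0 < \<epsilon>" "\<epsilon> < 1" "n > 0"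
    and X0: "X0 = real (opinion_count n x0 i)" "0 < X0"
    and N: "real N \<le> (1 - \<epsilon>) * cu / (1 + cu)^2 / (X0 / n)"
  shows "measure_pmf.prob (run ThreeMajority n x0 N)
      (reached_while (\<lambda>_. True) (\<lambda>x. (1 + cu) * X0 \<le> real (opinion_count n x i)))
    \<le> exp (- (\<epsilon>^2 * cu / 8) * (X0^2 / n))"
proof -
  have "X0 \<le> n" using opinion_count_le[of n x0 i] X0 by simp
  \<comment> \<open>the quadratic term \<open>2 l\<^sup>2 M\<close> of the drift forces \<open>l\<close> to be of order \<open>X0 / n\<close>\<close>
  define l where "l = \<epsilon> * X0 / (4 * n)"
  have "\<epsilon> * X0 \<le> 1 * real n" using pos X0(2) \<open>X0 \<le> n\<close> by (intro mult_mono) auto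
  then have l: "0 \<le> l" "l \<le> 1"
    using pos X0(2) by (auto simp: l_def field_simps)
  define u where "u = 1 + cu"
  define M where "M = u * X0"
  define D where "D = l * M^2 / n + 2 * l^2 * M"
  have "u > 0" "D \<ge> 0" using pos X0(2) l by (simp_all add: D_def M_def u_def)
  have "measure_pmf.prob (run ThreeMajority n x0 N)
      (reached_while (\<lambda>_. True) (\<lambda>x. M \<le> real (opinion_count n x i)))
    \<le> exp (l * X0 - l * M + real N * D)"
    unfolding X0(1)
  proof (rule prob_reached_while_le_exp[where Inv="\<lambda>_. True"])
    show "(\<integral>\<^sup>+y. ennreal (exp (l * real (opinion_count n y i))) \<partial>step ThreeMajority n x) \<le>
        ennreal (exp (l * real (opinion_count n x i) + D))"
      if "\<not> M \<le> real (opinion_count n x i)" for x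
      using mgf_ThreeMajority_up[OF \<open>n > 0\<close> l, of x i M] that by (simp add: D_def)
  qed (use l \<open>D \<ge> 0\<close> in \<open>auto intro: mult_left_mono\<close>)
  also have "\<dots> \<le> exp (- (\<epsilon>^2 * cu / 8) * (X0^2 / n))"
  proof -
    have "real N * D \<le> (1 - \<epsilon>) * cu / u^2 / (X0 / n) * D"
      using N \<open>D \<ge> 0\<close> unfolding u_def by (rule mult_right_mono)
    also have "\<dots> = (1 - \<epsilon>) * cu * l * X0 + 2 * (1 - \<epsilon>) * cu / u * (n * l) * l"
      using \<open>u > 0\<close> pos X0(2) by (simp add: D_def M_def field_simps power2_eq_square)
    also have "n * l = \<epsilon> * X0 / 4"
      using pos by (simp add: l_def)
    also have "(1 - \<epsilon>) * cu * l * X0 + 2 * (1 - \<epsilon>) * cu / u * (\<epsilon> * X0 / 4) * l =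
        cu * l * X0 * ((1 - \<epsilon>) + (1 - \<epsilon>) * \<epsilon> / (2 * u))"
      using \<open>u > 0\<close> by (simp add: field_simps)
    also have "\<dots> \<le> cu * l * X0 * ((1 - \<epsilon>) + \<epsilon> / 2)"
      using pos X0(2) l by (intro mult_left_mono add_left_mono) (auto simp: u_def field_simps)
    finally have "l * X0 - l * M + real N * D \<le> - (\<epsilon> / 2) * (cu * l * X0)"
      by (simp add: M_def u_def algebra_simps)
    also have "\<dots> = - (\<epsilon>^2 * cu / 8) * (X0^2 / n)"
      by (simp add: l_def power2_eq_square)
    finally show ?thesis by simp
  qed
  finally show ?thesis by (simp add: M_def u_def)
qed

lemma prob_TwoChoices_up:
  assumes pos: "0 < cu" "0 < \<epsilon>" "\<epsilon> < 1" "n > 0"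
    and X0: "X0 = real (opinion_count n x0 i)" "0 < X0"
    and N: "real N \<le> (1 - \<epsilon>) * cu / (1 + cu)^2 / (X0 / n)"
  shows "measure_pmf.prob (run TwoChoices n x0 N)
      (reached_while (\<lambda>_. True) (\<lambda>x. (1 + cu) * X0 \<le> real (opinion_count n x i)))
    \<le> exp (- (\<epsilon>^2 * cu / 4) * X0)"
proof -
  define l where "l = \<epsilon> / 2"
  have l: "0 \<le> l" "l \<le> 1" using pos by (auto simp: l_def)
  define u where "u = 1 + cu"
  define M where "M = u * X0"
  define D where "D = (l + l^2) * M^2 / n"
  have "u > 0" "D \<ge> 0" using pos X0(2) l by (simp_all add: D_def M_def u_def)
  have "measure_pmf.prob (run TwoChoices n x0 N)
      (reached_while (\<lambda>_. True) (\<lambda>x. M \<le> real (opinion_count n x i)))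
    \<le> exp (l * X0 - l * M + real N * D)"
    unfolding X0(1)
  proof (rule prob_reached_while_le_exp[where Inv="\<lambda>_. True"])
    show "(\<integral>\<^sup>+y. ennreal (exp (l * real (opinion_count n y i))) \<partial>step TwoChoices n x) \<le>
        ennreal (exp (l * real (opinion_count n x i) + D))"
      if "\<not> M \<le> real (opinion_count n x i)" for x
      using mgf_TwoChoices_up[OF \<open>n > 0\<close> l, of x i M] that by (simp add: D_def)
  qed (use l \<open>D \<ge> 0\<close> in \<open>auto intro: mult_left_mono\<close>)
  also have "\<dots> \<le> exp (- (\<epsilon>^2 * cu / 4) * X0)"
  proof -
    have "real N * D \<le> (1 - \<epsilon>) * cu / u^2 / (X0 / n) * D"
      using N \<open>D \<ge> 0\<close> unfolding u_def by (rule mult_right_mono)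
    also have "\<dots> = cu * X0 * ((1 - \<epsilon>) * (l + l^2))"
      using \<open>u > 0\<close> pos X0(2) by (simp add: D_def M_def field_simps power2_eq_square)
    also have "\<dots> \<le> cu * X0 * (l - \<epsilon>^2 / 4)"
      using pos X0(2) by (intro mult_left_mono) (auto simp: l_def field_simps power2_eq_square)
    finally show ?thesis
      by (simp add: M_def u_def l_def algebra_simps power2_eq_square)
  qed
  finally show ?thesis by (simp add: M_def u_def)
qed

lemma prob_ThreeMajority_down:
  assumes pos: "0 < cu" "0 < cd" "0 < \<kappa>" "\<kappa> \<le> 1" "0 < \<epsilon>" "\<epsilon> < 1" "n > 0"
    and X0: "X0 = real (opinion_count n x0 i)" "0 < X0"
    and N: "real N \<le> (1 - \<epsilon>) * cd / (\<kappa> * (1 + cu)^2) / (X0 / n)"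
    and Inv_step: "\<And>x y. Inv x \<Longrightarrow> y \<in> set_pmf (step ThreeMajority n x) \<Longrightarrow> Inv y" and "Inv x0"
    and guard: "\<And>x. Inv x \<Longrightarrow> G x \<Longrightarrow> real (opinion_count n x i) \<le> (1 + cu) * X0 \<and>
        collisions n x \<le> (1 + \<kappa>) * real n * real (opinion_count n x i)"
  shows "measure_pmf.prob (run ThreeMajority n x0 N)
      (reached_while G (\<lambda>x. real (opinion_count n x i) \<le> (1 - cd) * X0))
    \<le> exp (- (\<epsilon>^2 * \<kappa> * cd / 4) * (X0^2 / n))"
proof -
  define l where "l = \<epsilon> * \<kappa> * X0 / (2 * n)"
  have "l \<ge> 0" using pos X0(2) by (simp add: l_def)
  define u where "u = 1 + cu"
  define M where "M = u * X0"
  define D where "D = l^2 * M + l * \<kappa> * M^2 / n"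
  have "u > 0" "D \<ge> 0" using pos X0(2) \<open>l \<ge> 0\<close> by (simp_all add: D_def M_def u_def)
  have "measure_pmf.prob (run ThreeMajority n x0 N)
      (reached_while G (\<lambda>x. real (opinion_count n x i) \<le> (1 - cd) * X0))
    \<le> exp ((-l) * X0 - (-l) * ((1 - cd) * X0) + real N * D)"
    unfolding X0(1)
  proof (rule prob_reached_while_le_exp[where Inv=Inv])
    show "(\<integral>\<^sup>+y. ennreal (exp ((-l) * real (opinion_count n y i))) \<partial>step ThreeMajority n x) \<le>
        ennreal (exp ((-l) * real (opinion_count n x i) + D))"
      if "Inv x" "G x" for x
      using mgf_ThreeMajority_down[OF \<open>n > 0\<close> \<open>l \<ge> 0\<close>, of \<kappa> x i M] guard[OF that] pos
      by (simp add: D_def M_def u_def X0(1))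
  qed (use \<open>l \<ge> 0\<close> \<open>D \<ge> 0\<close> Inv_step \<open>Inv x0\<close> in \<open>auto simp: X0(1) intro: mult_left_mono\<close>)
  also have "\<dots> \<le> exp (- (\<epsilon>^2 * \<kappa> * cd / 4) * (X0^2 / n))"
  proof -
    have "real N * D \<le> (1 - \<epsilon>) * cd / (\<kappa> * u^2) / (X0 / n) * D"
      using N \<open>D \<ge> 0\<close> unfolding u_def by (rule mult_right_mono)
    also have "\<dots> = (1 - \<epsilon>) * cd * l * X0 + (1 - \<epsilon>) * cd / (\<kappa> * u) * (n * l) * l"
      using \<open>u > 0\<close> pos X0(2) by (simp add: D_def M_def field_simps power2_eq_square)
    also have "n * l = \<epsilon> * \<kappa> * X0 / 2"
      using pos by (simp add: l_def)
    also have "(1 - \<epsilon>) * cd * l * X0 + (1 - \<epsilon>) * cd / (\<kappa> * u) * (\<epsilon> * \<kappa> * X0 / 2) * l =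
        cd * l * X0 * ((1 - \<epsilon>) + (1 - \<epsilon>) * \<epsilon> / (2 * u))"
      using \<open>u > 0\<close> pos by (simp add: field_simps)
    also have "\<dots> \<le> cd * l * X0 * ((1 - \<epsilon>) + \<epsilon> / 2)"
      using pos X0(2) \<open>l \<ge> 0\<close> by (intro mult_left_mono add_left_mono) (auto simp: u_def field_simps)
    finally have "(-l) * X0 - (-l) * ((1 - cd) * X0) + real N * D \<le> - (\<epsilon> / 2) * (cd * l * X0)"
      by (simp add: algebra_simps)
    also have "\<dots> = - (\<epsilon>^2 * \<kappa> * cd / 4) * (X0^2 / n)"
      by (simp add: l_def power2_eq_square)
    finally show ?thesis by simp
  qed
  finally show ?thesis .
qed

lemma prob_TwoChoices_down:
  assumes pos: "0 < cu" "0 < cd" "0 < \<kappa>" "\<kappa> \<le> 1" "0 < \<epsilon>" "\<epsilon> < 1" "n > 0"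
    and X0: "X0 = real (opinion_count n x0 i)" "0 < X0"
    and N: "real N \<le> (1 - \<epsilon>) * cd / (\<kappa> * (1 + cu)^2) / (X0 / n)"
    and Inv_step: "\<And>x y. Inv x \<Longrightarrow> y \<in> set_pmf (step TwoChoices n x) \<Longrightarrow> Inv y" and "Inv x0"
    and guard: "\<And>x. Inv x \<Longrightarrow> G x \<Longrightarrow> real (opinion_count n x i) \<le> (1 + cu) * X0 \<and>
        collisions n x \<le> (1 + \<kappa>) * real n * real (opinion_count n x i)"
  shows "measure_pmf.prob (run TwoChoices n x0 N)
      (reached_while G (\<lambda>x. real (opinion_count n x i) \<le> (1 - cd) * X0))
    \<le> exp (- (\<epsilon>^2 * \<kappa> * cd / 12) * X0)"
proof -
  define l where "l = \<epsilon> * \<kappa> / 6"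
  have l: "0 \<le> l" "l \<le> 1" using pos mult_mono[of \<epsilon> 1 \<kappa> 1] by (auto simp: l_def)
  define u where "u = 1 + cu"
  define M where "M = u * X0"
  define D where "D = (l * \<kappa> + 3 * l^2) * M^2 / n"
  have "u > 0" "D \<ge> 0" using pos X0(2) l by (simp_all add: D_def M_def u_def)
  have "measure_pmf.prob (run TwoChoices n x0 N)
      (reached_while G (\<lambda>x. real (opinion_count n x i) \<le> (1 - cd) * X0))
    \<le> exp ((-l) * X0 - (-l) * ((1 - cd) * X0) + real N * D)"
    unfolding X0(1)
  proof (rule prob_reached_while_le_exp[where Inv=Inv])
    show "(\<integral>\<^sup>+y. ennreal (exp ((-l) * real (opinion_count n y i))) \<partial>step TwoChoices n x) \<le>
        ennreal (exp ((-l) * real (opinion_count n x i) + D))"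
      if "Inv x" "G x" for x
      using mgf_TwoChoices_down[OF \<open>n > 0\<close> l, of \<kappa> x i M] guard[OF that] pos
      by (simp add: D_def M_def u_def X0(1))
  qed (use l \<open>D \<ge> 0\<close> Inv_step \<open>Inv x0\<close> in \<open>auto simp: X0(1) intro: mult_left_mono\<close>)
  also have "\<dots> \<le> exp (- (\<epsilon>^2 * \<kappa> * cd / 12) * X0)"
  proof -
    have "real N * D \<le> (1 - \<epsilon>) * cd / (\<kappa> * u^2) / (X0 / n) * D"
      using N \<open>D \<ge> 0\<close> unfolding u_def by (rule mult_right_mono)
    also have "\<dots> = cd * X0 * l * ((1 - \<epsilon>) * (1 + \<epsilon> / 2))"
      using \<open>u > 0\<close> pos X0(2) by (simp add: D_def M_def l_def field_simps power2_eq_square)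
    also have "\<dots> \<le> cd * X0 * l * (1 - \<epsilon> / 2)"
      using pos X0(2) l by (intro mult_left_mono) (auto simp: field_simps)
    finally have "(-l) * X0 - (-l) * ((1 - cd) * X0) + real N * D \<le> - (\<epsilon> / 2) * (cd * l * X0)"
      by (simp add: algebra_simps)
    also have "\<dots> = - (\<epsilon>^2 * \<kappa> * cd / 12) * X0"
      by (simp add: l_def power2_eq_square)
    finally show ?thesis by simp
  qed
  finally show ?thesis .
qed

lemma hit_eq_enatD:
  assumes "hit A xs = enat t"
  shows "t < length xs" "A (xs!t)" "\<forall>s<t. \<not> A (xs!s)"
proof -
  have ex: "\<exists>t<length xs. A (xs ! t)" and t: "t = (LEAST t. t < length xs \<and> A (xs ! t))"
    using assms by (auto simp: hit_def split: if_splits)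
  show "t < length xs" "A (xs!t)" unfolding t using LeastI_ex[OF ex] by auto
  show "\<forall>s<t. \<not> A (xs!s)" using not_less_Least \<open>t < length xs\<close> unfolding t by fastforce
qed

lemma hit_le_enat: "s < length xs \<Longrightarrow> A (xs!s) \<Longrightarrow> hit A xs \<le> enat s"
  unfolding hit_def by (auto intro: Least_le)

lemma prob_hit_le:
  assumes "measure_pmf.prob M (reached_while (\<lambda>_. True) A) \<le> b"
  shows "measure_pmf.prob M {xs. \<exists>t. hit A xs = enat t \<and> Q t} \<le> b"
proof -
  have "{xs. \<exists>t. hit A xs = enat t \<and> Q t} \<subseteq> reached_while (\<lambda>_. True) A"
    using hit_eq_enatD unfolding reached_while_def by blast
  from order_trans[OF measure_pmf.finite_measure_mono[OF this] assms] show ?thesis by simp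
qed

lemma prob_hit_first_le:
  assumes "measure_pmf.prob M (reached_while (\<lambda>x. \<not> W x \<and> \<not> U x) A) \<le> b"
  shows "measure_pmf.prob M {xs. \<exists>t. hit A xs = enat t \<and> enat t \<le> hit W xs \<and> enat t \<le> hit U xs \<and> Q t} \<le> b"
proof -
  have "xs \<in> reached_while (\<lambda>x. \<not> W x \<and> \<not> U x) A"
    if "hit A xs = enat t" "enat t \<le> hit W xs" "enat t \<le> hit U xs" for xs t
  proof -
    have "\<not> W (xs!s) \<and> \<not> U (xs!s)" if "s < t" for s
      using hit_le_enat[of s xs W] hit_le_enat[of s xs U] hit_eq_enatD(1)[OF \<open>hit A xs = enat t\<close>]
        \<open>enat t \<le> hit W xs\<close> \<open>enat t \<le> hit U xs\<close> that
      by (metis enat_ord_simps(2) leD order_trans less_trans)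
    then show ?thesis unfolding reached_while_def using hit_eq_enatD[OF that(1)] by blast
  qed
  then have "{xs. \<exists>t. hit A xs = enat t \<and> enat t \<le> hit W xs \<and> enat t \<le> hit U xs \<and> Q t}
      \<subseteq> reached_while (\<lambda>x. \<not> W x \<and> \<not> U x) A" by blast
  from order_trans[OF measure_pmf.finite_measure_mono[OF this] assms] show ?thesis by simp
qed

lemma exp_minus_mult_mono: "c \<le> c' \<Longrightarrow> 0 \<le> m \<Longrightarrow> exp (- c' * m) \<le> exp (- (c::real) * m)"
  by (simp add: mult_right_mono)

lemma prob_reached_while_up:
  assumes "0 < cu" "0 < \<epsilon>" "\<epsilon> < 1" "n > 0" "0 < alpha n x0 i" "c \<le> \<epsilon>^2 * cu / 8"
    and N: "real N \<le> (1 - \<epsilon>) * cu / (1 + cu)^2 / alpha n x0 i"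
  shows "measure_pmf.prob (run p n x0 N)
      (reached_while (\<lambda>_. True) (\<lambda>x. alpha n x i \<ge> (1 + cu) * alpha n x0 i))
    \<le> exp (- c * real n * (if p = ThreeMajority then (alpha n x0 i)^2 else alpha n x0 i))"
proof -
  define X0 where "X0 = real (opinion_count n x0 i)"
  have a0: "alpha n x0 i = X0 / n" "0 < X0"
    using assms(4,5) by (auto simp: X0_def alpha_eq_opinion_count zero_less_divide_iff)
  have rhs: "exp (- c * real n * (if p = ThreeMajority then (alpha n x0 i)^2 else alpha n x0 i)) =
      exp (- c * (if p = ThreeMajority then X0^2 / n else X0))"
    using \<open>n > 0\<close> by (simp add: a0(1) power2_eq_square)
  have N': "real N \<le> (1 - \<epsilon>) * cu / (1 + cu)^2 / (X0 / n)" using N a0 by simp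
  note up_iff = mult_alpha_le_alpha_iff[OF \<open>n > 0\<close>, of "1 + cu" x0 i, folded X0_def]
  show ?thesis
  proof (cases p)
    case ThreeMajority
    have "exp (- (\<epsilon>^2 * cu / 8) * (X0^2 / n)) \<le> exp (- c * (X0^2 / n))"
      using assms(6) by (intro exp_minus_mult_mono) auto
    then show ?thesis
      unfolding rhs unfolding up_iff ThreeMajority
      using order_trans[OF prob_ThreeMajority_up[OF assms(1-4) X0_def a0(2) N']] by simp
  next
    case TwoChoices
    have "0 \<le> \<epsilon>^2 * cu" using assms(1) by simp
    then have "exp (- (\<epsilon>^2 * cu / 4) * X0) \<le> exp (- c * X0)"
      using assms(6) a0(2) by (intro exp_minus_mult_mono) auto
    then show ?thesis
      unfolding rhs unfolding up_iff TwoChoices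
      using order_trans[OF prob_TwoChoices_up[OF assms(1-4) X0_def a0(2) N']] by simp
  qed
qed

lemma prob_reached_while_down:
  assumes "0 < cu" "0 < cd" "0 < cw" "cw < 1/2" "0 < \<epsilon>" "\<epsilon> < 1" "n > 0" "valid_config n k x0"
    "0 < alpha n x0 i" "c \<le> \<epsilon>^2 * cw * cd / 12"
    and N: "real N \<le> (1 - cw) * (1 - \<epsilon>) * cd / (cw * (1 + cu)^2) / alpha n x0 i"
  shows "measure_pmf.prob (run p n x0 N)
      (reached_while (\<lambda>x. \<not> alpha n x i \<le> (1 - cw) * gamma n k x \<and> \<not> alpha n x i \<ge> (1 + cu) * alpha n x0 i)
        (\<lambda>x. alpha n x i \<le> (1 - cd) * alpha n x0 i))
    \<le> exp (- c * real n * (if p = ThreeMajority then (alpha n x0 i)^2 else alpha n x0 i))"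
    (is "measure_pmf.prob _ (reached_while ?G _) \<le> _")
proof -
  define X0 where "X0 = real (opinion_count n x0 i)"
  have a0: "alpha n x0 i = X0 / n" "0 < X0"
    using assms(7,9) by (auto simp: X0_def alpha_eq_opinion_count zero_less_divide_iff)
  have rhs: "exp (- c * real n * (if p = ThreeMajority then (alpha n x0 i)^2 else alpha n x0 i)) =
      exp (- c * (if p = ThreeMajority then X0^2 / n else X0))"
    using \<open>n > 0\<close> by (simp add: a0(1) power2_eq_square)
  \<comment> \<open>\<open>1 + \<kappa> = 1 / (1 - cw)\<close>, and \<open>C\<^sub>2 = (1 - \<epsilon>) cd / (\<kappa> (1 + cu)\<^sup>2)\<close>\<close>
  define \<kappa> where "\<kappa> = cw / (1 - cw)"
  have \<kappa>: "0 < \<kappa>" "\<kappa> \<le> 1" "cw \<le> \<kappa>"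
    using assms(3,4) by (auto simp: \<kappa>_def field_simps)
  have N': "real N \<le> (1 - \<epsilon>) * cd / (\<kappa> * (1 + cu)^2) / (X0 / n)"
    using N assms(4) by (simp add: a0(1) \<kappa>_def mult_ac)
  have guard: "real (opinion_count n x i) \<le> (1 + cu) * X0 \<and>
      collisions n x \<le> (1 + \<kappa>) * real n * real (opinion_count n x i)"
    if "valid_config n k x" "?G x" for x
    using that collisions_le_if_not_weak[OF \<open>n > 0\<close> that(1), of cw] assms(4)
    unfolding mult_alpha_le_alpha_iff[OF \<open>n > 0\<close>, of "1 + cu" x0 i, folded X0_def] \<kappa>_def
    by simp
  have "0 \<le> \<epsilon>^2 * cd" using assms(2) by simp
  then have c: "c \<le> \<epsilon>^2 * \<kappa> * cd / 12" "0 \<le> \<epsilon>^2 * \<kappa> * cd"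
    using assms(10) \<kappa> mult_right_mono[OF \<kappa>(3), of "\<epsilon>^2 * cd"] by (simp_all add: mult_ac)
  note down_iff = alpha_le_mult_alpha_iff[OF \<open>n > 0\<close>, of _ i "1 - cd" x0 i, folded X0_def]
  show ?thesis
  proof (cases p)
    case ThreeMajority
    have "exp (- (\<epsilon>^2 * \<kappa> * cd / 4) * (X0^2 / n)) \<le> exp (- c * (X0^2 / n))"
      using c by (intro exp_minus_mult_mono) auto
    then show ?thesis
      unfolding rhs unfolding down_iff ThreeMajority
      using order_trans[OF prob_ThreeMajority_down[where Inv="valid_config n k" and G="?G",
            OF assms(1,2) \<kappa>(1,2) assms(5-7) X0_def a0(2) N' valid_config_step[of n k] assms(8) guard]]
      by simp
  next
    case TwoChoices
    have "exp (- (\<epsilon>^2 * \<kappa> * cd / 12) * X0) \<le> exp (- c * X0)"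
      using c a0(2) by (intro exp_minus_mult_mono) auto
    then show ?thesis
      unfolding rhs unfolding down_iff TwoChoices
      using order_trans[OF prob_TwoChoices_down[where Inv="valid_config n k" and G="?G",
            OF assms(1,2) \<kappa>(1,2) assms(5-7) X0_def a0(2) N' valid_config_step[of n k] assms(8) guard]]
      by simp
  qed
qed

theorem lemma4p5:
  fixes p :: protocol and cu cd cw \<epsilon> :: real
  assumes "cu > 0" and "cd > 0" and "0 < cw" and "cw < 1/2"
      and "0 < \<epsilon>" and "\<epsilon> < 1"
  shows "\<exists>c>0. \<forall>n k opn0 i.
     1 \<le> k \<and> k \<le> n \<and> (\<forall>v<n. opn0 v \<in> {1..k}) \<and> i \<in> {1..k} \<longrightarrow>
     (let a0 = alpha n opn0 i;
          P = exp (- c * real n * (if p = ThreeMajority then a0^2 else a0));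
          C1 = (1 - \<epsilon>) * cu / (1 + cu)^2;
          C2 = (1 - cw) * (1 - \<epsilon>) * cd / (cw * (1 + cu)^2);
          up = (\<lambda>opn. alpha n opn i \<ge> (1 + cu) * a0);
          down = (\<lambda>opn. alpha n opn i \<le> (1 - cd) * a0);
          weak = (\<lambda>opn. alpha n opn i \<le> (1 - cw) * gamma n k opn);
          N1 = nat \<lfloor>C1 / a0\<rfloor>;
          N2 = nat \<lfloor>C2 / a0\<rfloor>
      in measure_pmf.prob (run p n opn0 N1)
           {xs. \<exists>t::nat. hit up xs = enat t \<and> real t \<le> C1 / a0} \<le> P
       \<and> measure_pmf.prob (run p n opn0 N2)
           {xs. \<exists>t::nat. hit down xs = enat t \<and> enat t \<le> hit weak xs
                   \<and> enat t \<le> hit up xs \<and> real t \<le> C2 / a0} \<le> P)"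
proof -
  define c where "c = \<epsilon>^2 * min cu (cw * cd) / 12"
  have c: "0 < c" "c \<le> \<epsilon>^2 * cu / 8" "c \<le> \<epsilon>^2 * cw * cd / 12"
    using assms by (auto simp: c_def min_def)
  show ?thesis
    apply (intro exI[of _ c] conjI allI impI c(1))
    subgoal premises H for n k x0 i
    proof (cases "alpha n x0 i = 0")
      case False
      have "n > 0" "valid_config n k x0" using H by (auto simp: valid_config_def)
      have "0 \<le> alpha n x0 i" by (simp add: alpha_def)
      with False have "0 < alpha n x0 i" by simp
      then have N: "real (nat \<lfloor>C / alpha n x0 i\<rfloor>) \<le> C / alpha n x0 i" if "0 \<le> C" for C
        using that by (simp add: of_nat_nat)
      show ?thesis
        unfolding Let_def
        by (intro conjI prob_hit_le prob_hit_first_le N prob_reached_while_up[where \<epsilon>=\<epsilon>]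
            prob_reached_while_down[where \<epsilon>=\<epsilon> and cw=cw and cu=cu and cd=cd and k=k])
          (use assms c \<open>n > 0\<close> \<open>valid_config n k x0\<close> \<open>0 < alpha n x0 i\<close> in auto)
    qed (simp add: measure_pmf.prob_le_1)
    done
qed

end
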